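(* For $n\in\mathbb{N}^\star$ let $\phi_n(x)=\int_0^\pi e^{-2x\sin\eta}e^{2in\eta}\,\mathrm{d}\eta$ and $\varphi_n(x)=n\phi_n(nx)$. Then for every $x>0$ and $n\ge1$, $$\frac{4n^2}{4n^2+1}\frac{x}{1+x^2}\le\varphi_n(x)\le\frac{4n^2}{4n^2-1}\frac{x}{1+x^2}$$ and $$\frac{4n^2}{4n^2+1}\frac{x}{n^2+x^2}\le\phi_n(x)\le\frac{4n^2}{4n^2-1}\frac{x}{n^2+x^2}.$$ *)

theory Defs
  imports "HOL-Analysis.Analysis"
begin

definition phi :: "nat \<Rightarrow> real \<Rightarrow> complex" where
  "phi n x = integral {0..pi}
     (\<lambda>\<eta>. complex_of_real (exp (- 2 * x * sin \<eta>)) * exp (2 * \<i> * of_nat n * complex_of_real \<eta>))"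

definition varphi :: "nat \<Rightarrow> real \<Rightarrow> complex" where
  "varphi n x = of_nat n * phi n (real n * x)"

end

theory Submission
  imports Defs
begin

text \<open>
  Under \<open>t \<mapsto> pi - t\<close> the imaginary part of the integrand of \<open>phi n\<close> is odd, so
  \<open>phi n x\<close> is the real number \<open>F x = \<integral>\<^sub>0\<^sup>\<pi> exp (-2 x sin t) cos (2 n t) dt\<close>.
  Differentiating under the integral and integrating the result exactly in \<open>t\<close> shows that \<open>F\<close>
  solves the Bessel-type equation \<open>x\<^sup>2 F'' + x F' - 4 (n\<^sup>2 + x\<^sup>2) F = -4 x\<close>, with
  \<open>F 0 = 0\<close> and \<open>F x = O(1/x)\<close>. The rational function \<open>b x = x / (n\<^sup>2 + x\<^sup>2)\<close> solves the same
  equation up to an error of at most \<open>x / n\<^sup>2\<close>, so for \<open>c = 4 n\<^sup>2 / (4 n\<^sup>2 \<mp> 1)\<close> the function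
  \<open>c b\<close> is a super- resp. subsolution. A maximum principle on the half-line, applied to the
  difference, sandwiches \<open>F\<close> between these multiples of \<open>b\<close>; the bounds for \<open>varphi n\<close>
  follow by rescaling \<open>x \<mapsto> n x\<close>.
\<close>

lemma fundamental_theorem_of_calculus_real:
  fixes F :: "real \<Rightarrow> real"
  assumes "a \<le> b" and "\<And>t. (F has_real_derivative f t) (at t)"
  shows "(f has_integral F b - F a) {a..b}"
  using assms
  by (intro fundamental_theorem_of_calculus)
    (auto simp: has_real_derivative_iff_has_vector_derivative[symmetric] intro: has_field_derivative_at_within)

lemma integral_reflect_midpoint_real:
  fixes f :: "real \<Rightarrow> 'a::euclidean_space"
  shows "integral {a..b} (\<lambda>t. f (a + b - t)) = integral {a..b} f"
proof -
  have "integral {a..b} (\<lambda>t. f (a + b - t)) = integral {-b..-a} (\<lambda>s. f (s + (a + b)))"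
    using Henstock_Kurzweil_Integration.integral_reflect_real[of "-a" "-b" "\<lambda>s. f (s + (a + b))"]
    by simp
  also have "\<dots> = integral {a..b} f"
    using integral_shift_real_ivl[of a "a + b" b f] by simp
  finally show ?thesis .
qed

lemma tendsto_0_if_abs_le_const_div:
  fixes f :: "real \<Rightarrow> real"
  assumes "\<And>y. y > 0 \<Longrightarrow> \<bar>f y\<bar> \<le> K / y"
  shows "(f \<longlongrightarrow> 0) at_top"
proof (rule Lim_null_comparison)
  show "\<forall>\<^sub>F y in at_top. norm (f y) \<le> K / y"
    using eventually_gt_at_top[of 0] by eventually_elim (simp add: assms)
  show "((\<lambda>y. K / y) \<longlongrightarrow> 0) at_top"
    by (intro tendsto_divide_0[OF tendsto_const] filterlim_at_top_imp_at_infinity filterlim_ident)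
qed

lemma quarter_le_sin:
  fixes t :: real
  assumes "0 \<le> t" "t \<le> pi / 2"
  shows "t / 4 \<le> sin t"
proof -
  have taylor: "(\<Sum>m<3. sin_coeff m * t ^ m) = t"
    by (simp add: eval_nat_numeral sin_coeff_def)
  have "\<bar>sin t - t\<bar> \<le> inverse (fact 3) * \<bar>t\<bar> ^ 3"
    using Maclaurin_sin_bound[of t 3] unfolding taylor .
  also have "\<dots> = t ^ 3 / 6"
    using assms by (simp add: fact_numeral)
  finally have "\<bar>sin t - t\<bar> \<le> t ^ 3 / 6" .
  moreover have "t ^ 3 \<le> 4 * t"
  proof -
    have "t\<^sup>2 \<le> 2\<^sup>2"
      using assms pi_less_4 by (intro power_mono) auto
    then have "t * t\<^sup>2 \<le> t * 2\<^sup>2"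
      using assms(1) by (rule mult_left_mono)
    then show ?thesis
      by (simp add: power3_eq_cube power2_eq_square)
  qed
  ultimately show ?thesis
    by linarith
qed

lemma second_derivative_test_right:
  fixes w w' w'' :: "real \<Rightarrow> real"
  assumes w': "\<And>y. (w has_real_derivative w' y) (at y)"
    and w'': "\<And>y. (w' has_real_derivative w'' y) (at y)"
    and "w' x = 0" and "w'' x > 0" and "\<delta> > 0"
  obtains h where "0 < h" "h < \<delta>" "w x < w (x + h)"
proof -
  obtain d where "d > 0" and w'_pos: "\<And>h. 0 < h \<Longrightarrow> h < d \<Longrightarrow> 0 < w' (x + h)"
    using DERIV_pos_inc_right[OF w'' \<open>w'' x > 0\<close>] \<open>w' x = 0\<close> by metis
  define h where "h = min (d / 2) (\<delta> / 2)"
  have "0 < h" "h < d" "h < \<delta>"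
    using \<open>d > 0\<close> \<open>\<delta> > 0\<close> by (auto simp: h_def)
  have "w x < w (x + h)"
  proof (rule DERIV_pos_imp_increasing_open[of x "x + h" w])
    show "\<exists>l. (w has_real_derivative l) (at y) \<and> 0 < l" if "x < y" "y < x + h" for y
      using w' w'_pos[of "y - x"] that \<open>h < d\<close> by force
    show "continuous_on {x..x + h} w"
      using w' by (meson DERIV_isCont continuous_at_imp_continuous_on)
  qed (use \<open>0 < h\<close> in simp)
  with \<open>0 < h\<close> \<open>h < \<delta>\<close> show ?thesis
    by (rule that)
qed

lemma halfline_max_principle:
  fixes w w' w'' :: "real \<Rightarrow> real"
  assumes w': "\<And>y. (w has_real_derivative w' y) (at y)"
    and w'': "\<And>y. (w' has_real_derivative w'' y) (at y)"
    and at_0: "w 0 = 0" and at_top: "(w \<longlongrightarrow> 0) at_top"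
    and no_max: "\<And>y. y > 0 \<Longrightarrow> w' y = 0 \<Longrightarrow> w y > 0 \<Longrightarrow> w'' y > 0"
    and "x > 0"
  shows "w x \<le> 0"
proof (rule ccontr)
  assume "\<not> w x \<le> 0"
  then have wx: "w x > 0" by simp
  obtain M where M: "\<And>y. y \<ge> M \<Longrightarrow> w y < w x"
    using order_tendstoD(2)[OF at_top wx] by (auto simp: eventually_at_top_linorder)
  define R where "R = max M (x + 1)"
  have "continuous_on {0..R} w"
    using w' by (meson DERIV_isCont continuous_at_imp_continuous_on)
  then obtain x0 where x0: "x0 \<in> {0..R}" and max: "\<And>y. y \<in> {0..R} \<Longrightarrow> w y \<le> w x0"
    using continuous_attains_sup[of "{0..R}" w] \<open>x > 0\<close> by (force simp: R_def)
  have "w x \<le> w x0"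
    using max \<open>x > 0\<close> by (simp add: R_def)
  moreover have "w R < w x"
    using M by (simp add: R_def)
  ultimately have x0_pos: "0 < x0" and x0_less: "x0 < R"
    using x0 wx at_0 by (auto simp: less_le)
  have "w' x0 = 0"
    by (rule DERIV_local_max[OF w', of "min x0 (R - x0)"])
      (use x0_pos x0_less max in \<open>auto simp: abs_less_iff\<close>)
  then have "w'' x0 > 0"
    using no_max x0_pos \<open>w x \<le> w x0\<close> wx by simp
  moreover have "R - x0 > 0"
    using x0_less by simp
  ultimately obtain h where "0 < h" "h < R - x0" "w x0 < w (x0 + h)"
    by (rule second_derivative_test_right[OF w' w'' \<open>w' x0 = 0\<close>])
  moreover have "w (x0 + h) \<le> w x0"
    using max \<open>0 < h\<close> \<open>h < R - x0\<close> x0_pos by simp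
  ultimately show False
    by simp
qed

lemma halfline_comparison_principle:
  fixes u u' u'' v v' v'' a :: "real \<Rightarrow> real"
  assumes "\<And>y. (u has_real_derivative u' y) (at y)" "\<And>y. (u' has_real_derivative u'' y) (at y)"
    and "\<And>y. (v has_real_derivative v' y) (at y)" "\<And>y. (v' has_real_derivative v'' y) (at y)"
    and "u 0 = v 0" and "(u \<longlongrightarrow> l) at_top" and "(v \<longlongrightarrow> l) at_top"
    and a_pos: "\<And>y. y > 0 \<Longrightarrow> a y > 0"
    and super: "\<And>y. y > 0 \<Longrightarrow>
      y\<^sup>2 * v'' y + y * v' y - a y * v y \<le> y\<^sup>2 * u'' y + y * u' y - a y * u y"
    and "x > 0"
  shows "u x \<le> v x"
proof -
  have "u x - v x \<le> 0"
  proof (rule halfline_max_principle[where w = "\<lambda>y. u y - v y"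
        and w' = "\<lambda>y. u' y - v' y" and w'' = "\<lambda>y. u'' y - v'' y"])
    show "((\<lambda>y. u y - v y) \<longlongrightarrow> 0) at_top"
      using tendsto_diff[OF assms(6,7)] by simp
    show "u'' y - v'' y > 0" if "y > 0" "u' y - v' y = 0" "u y - v y > 0" for y
    proof -
      have "0 < a y * (u y - v y)"
        using a_pos[OF \<open>y > 0\<close>] that(3) by simp
      also have "\<dots> \<le> y\<^sup>2 * (u'' y - v'' y)"
        using super[OF \<open>y > 0\<close>] that(2) by (simp add: algebra_simps)
      finally show ?thesis
        by (simp add: zero_less_mult_iff)
    qed
  qed (use assms in \<open>auto intro: derivative_intros\<close>)
  then show ?thesis
    by simp
qed

text \<open>The weight \<open>g\<close> makes the family closed under \<open>x\<close>-differentiation, which only multiplies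
  \<open>g\<close> by \<open>-2 sin t\<close>.\<close>

definition weighted_phi :: "nat \<Rightarrow> (real \<Rightarrow> real) \<Rightarrow> real \<Rightarrow> real" where
  "weighted_phi n g x = integral {0..pi} (\<lambda>t. g t * exp (- 2 * x * sin t) * cos (2 * real n * t))"

lemma has_integral_weighted_phi:
  assumes "continuous_on {0..pi} g"
  shows "((\<lambda>t. g t * exp (- 2 * x * sin t) * cos (2 * real n * t)) has_integral weighted_phi n g x) {0..pi}"
  unfolding weighted_phi_def
  by (intro integrable_integral integrable_continuous_interval continuous_intros assms)

lemma has_real_derivative_weighted_phi:
  assumes "continuous_on {0..pi} g"
  shows "(weighted_phi n g has_real_derivative weighted_phi n (\<lambda>t. - 2 * sin t * g t) x) (at x)"
proof -
  have g_snd: "continuous_on (UNIV \<times> {0..pi}) (\<lambda>p. g (snd p))"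
    by (rule continuous_on_compose2[OF assms continuous_on_snd]) auto
  have "((\<lambda>x. integral (cbox 0 pi) (\<lambda>t. g t * exp (- 2 * x * sin t) * cos (2 * real n * t)))
      has_field_derivative integral (cbox 0 pi) (\<lambda>t. - 2 * sin t * g t * exp (- 2 * x * sin t) * cos (2 * real n * t)))
      (at x within UNIV)"
    by (intro leibniz_rule_field_derivative integrable_continuous continuous_intros
          continuous_on_subset[OF assms])
      (auto intro!: derivative_eq_intros continuous_intros g_snd simp: case_prod_unfold)
  then show ?thesis
    by (simp add: weighted_phi_def[abs_def] mult.assoc)
qed

lemma has_real_derivative_weighted_phi_one:
  "(weighted_phi n (\<lambda>_. 1) has_real_derivative weighted_phi n (\<lambda>t. - 2 * sin t) y) (at y)"
  "(weighted_phi n (\<lambda>t. - 2 * sin t) has_real_derivative weighted_phi n (\<lambda>t. 4 * (sin t)\<^sup>2) y) (at y)"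
  using has_real_derivative_weighted_phi[of "\<lambda>_. 1" n y] has_real_derivative_weighted_phi[of "\<lambda>t. - 2 * sin t" n y]
  by (simp_all add: power2_eq_square continuous_intros)

lemma integral_exp_sin_sin_eq_0:
  "integral {0..pi} (\<lambda>t. exp (- 2 * x * sin t) * sin (2 * real n * t)) = 0"
proof -
  let ?f = "\<lambda>t. exp (- 2 * x * sin t) * sin (2 * real n * t)"
  have "sin (2 * real n * (pi - t)) = - sin (2 * real n * t)" for t
    by (simp add: right_diff_distrib sin_diff)
  then have "?f (0 + pi - t) = - ?f t" for t
    by simp
  then have "integral {0..pi} ?f = - integral {0..pi} ?f"
    using integral_reflect_midpoint_real[of 0 pi ?f] by (simp add: integral_neg)
  then show ?thesis
    by simp
qed

lemma phi_eq_weighted_phi: "phi n x = of_real (weighted_phi n (\<lambda>_. 1) x)"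
proof -
  have re: "((\<lambda>t. exp (- 2 * x * sin t) * cos (2 * real n * t)) has_integral weighted_phi n (\<lambda>_. 1) x) {0..pi}"
    using has_integral_weighted_phi[of "\<lambda>_. 1" x n] by simp
  have im: "((\<lambda>t. exp (- 2 * x * sin t) * sin (2 * real n * t)) has_integral 0) {0..pi}"
  proof -
    have "(\<lambda>t. exp (- 2 * x * sin t) * sin (2 * real n * t)) integrable_on {0..pi}"
      by (intro integrable_continuous_interval continuous_intros)
    from integrable_integral[OF this] show ?thesis
      unfolding integral_exp_sin_sin_eq_0 .
  qed
  have "(\<lambda>t. complex_of_real (exp (- 2 * x * sin t)) * exp (2 * \<i> * of_nat n * complex_of_real t))
      = (\<lambda>t. of_real (exp (- 2 * x * sin t) * cos (2 * real n * t))
             + \<i> * of_real (exp (- 2 * x * sin t) * sin (2 * real n * t)))"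
    by (simp add: fun_eq_iff complex_eq_iff Re_exp Im_exp)
  moreover have "((\<lambda>t. of_real (exp (- 2 * x * sin t) * cos (2 * real n * t))
             + \<i> * of_real (exp (- 2 * x * sin t) * sin (2 * real n * t)))
      has_integral of_real (weighted_phi n (\<lambda>_. 1) x)) {0..pi}"
    using has_integral_add[OF has_integral_of_real[OF re] has_integral_mult_right[OF has_integral_of_real[OF im]]]
    by simp
  ultimately show ?thesis
    unfolding phi_def by (simp add: integral_unique)
qed

lemma weighted_phi_bessel_ode:
  "x\<^sup>2 * weighted_phi n (\<lambda>t. 4 * (sin t)\<^sup>2) x + x * weighted_phi n (\<lambda>t. - 2 * sin t) x
     - 4 * (real n ^ 2 + x\<^sup>2) * weighted_phi n (\<lambda>_. 1) x = - 4 * x"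
proof -
  define H where "H t = 2 * x * cos t * exp (- 2 * x * sin t) * cos (2 * real n * t)
      - 2 * real n * exp (- 2 * x * sin t) * sin (2 * real n * t)" for t
  define h where "h t = - (2 * x * sin t + 4 * x\<^sup>2 * (cos t)\<^sup>2 + 4 * real n ^ 2)
      * exp (- 2 * x * sin t) * cos (2 * real n * t)" for t
  have "(H has_real_derivative h t) (at t)" for t
    unfolding H_def h_def
    by (auto intro!: derivative_eq_intros simp: algebra_simps power2_eq_square)
  then have "(h has_integral H pi - H 0) {0..pi}"
    by (intro fundamental_theorem_of_calculus_real) auto
  moreover have "H pi - H 0 = - 4 * x"
    by (simp add: H_def)
  moreover have "(h has_integral x\<^sup>2 * weighted_phi n (\<lambda>t. 4 * (sin t)\<^sup>2) x + x * weighted_phi n (\<lambda>t. - 2 * sin t) x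
      - 4 * (real n ^ 2 + x\<^sup>2) * weighted_phi n (\<lambda>_. 1) x) {0..pi}"
  proof -
    have "h = (\<lambda>t. x\<^sup>2 * (4 * (sin t)\<^sup>2 * exp (- 2 * x * sin t) * cos (2 * real n * t))
        + x * (- 2 * sin t * exp (- 2 * x * sin t) * cos (2 * real n * t))
        - 4 * (real n ^ 2 + x\<^sup>2) * (1 * exp (- 2 * x * sin t) * cos (2 * real n * t)))"
      by (simp add: h_def fun_eq_iff cos_squared_eq algebra_simps)
    then show ?thesis
      by (simp only:) (intro has_integral_diff has_integral_add has_integral_mult_right
          has_integral_weighted_phi continuous_intros)
  qed
  ultimately show ?thesis
    using has_integral_unique by metis
qed

lemma weighted_phi_one_at_0:
  assumes "n \<ge> 1"
  shows "weighted_phi n (\<lambda>_. 1) 0 = 0"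
proof -
  have "((\<lambda>t. sin (2 * real n * t) / (2 * real n)) has_real_derivative cos (2 * real n * t)) (at t)" for t
    using assms by (auto intro!: derivative_eq_intros)
  then have "((\<lambda>t. cos (2 * real n * t)) has_integral sin (2 * real n * pi) / (2 * real n) - sin (2 * real n * 0) / (2 * real n)) {0..pi}"
    by (intro fundamental_theorem_of_calculus_real) auto
  then show ?thesis
    by (simp add: weighted_phi_def integral_unique)
qed

lemma exp_sin_le_sum_exp:
  fixes t x :: real
  assumes "0 \<le> t" "t \<le> pi" "x > 0"
  shows "exp (- 2 * x * sin t) \<le> exp (- x * t / 2) + exp (- x * (pi - t) / 2)"
proof -
  have "exp (- 2 * x * sin t) \<le> exp (- x * s / 2)" if "0 \<le> s" "s \<le> pi / 2" "sin s = sin t" for s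
    using quarter_le_sin[OF that(1,2)] that(3) assms(3) by (simp add: mult_left_mono)
  then have "exp (- 2 * x * sin t) \<le> exp (- x * t / 2) \<or> exp (- 2 * x * sin t) \<le> exp (- x * (pi - t) / 2)"
    using assms by (cases "t \<le> pi / 2") auto
  then show ?thesis
    using exp_gt_zero[of "- x * t / 2"] exp_gt_zero[of "- x * (pi - t) / 2"] by linarith
qed

lemma abs_weighted_phi_one_le:
  assumes "x > 0"
  shows "\<bar>weighted_phi n (\<lambda>_. 1) x\<bar> \<le> 4 / x"
proof -
  define H where "H t = 2 * exp (- x * (pi - t) / 2) / x - 2 * exp (- x * t / 2) / x" for t
  have "(H has_real_derivative exp (- x * t / 2) + exp (- x * (pi - t) / 2)) (at t)" for t
    unfolding H_def using assms by (auto intro!: derivative_eq_intros simp: field_simps)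
  then have majorant: "((\<lambda>t. exp (- x * t / 2) + exp (- x * (pi - t) / 2)) has_integral H pi - H 0) {0..pi}"
    by (intro fundamental_theorem_of_calculus_real) auto
  have "norm (integral {0..pi} (\<lambda>t. 1 * exp (- 2 * x * sin t) * cos (2 * real n * t)))
      \<le> integral {0..pi} (\<lambda>t. exp (- x * t / 2) + exp (- x * (pi - t) / 2))"
  proof (rule integral_norm_bound_integral)
    fix t
    assume "t \<in> {0..pi}"
    have "norm (1 * exp (- 2 * x * sin t) * cos (2 * real n * t)) \<le> exp (- 2 * x * sin t)"
      by (simp add: abs_mult mult_left_le)
    also have "\<dots> \<le> exp (- x * t / 2) + exp (- x * (pi - t) / 2)"
      using exp_sin_le_sum_exp[of t x] \<open>t \<in> {0..pi}\<close> assms by simp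
    finally show "norm (1 * exp (- 2 * x * sin t) * cos (2 * real n * t))
        \<le> exp (- x * t / 2) + exp (- x * (pi - t) / 2)" .
  next
    show "(\<lambda>t. 1 * exp (- 2 * x * sin t) * cos (2 * real n * t)) integrable_on {0..pi}"
      by (intro integrable_continuous_interval continuous_intros)
  next
    show "(\<lambda>t. exp (- x * t / 2) + exp (- x * (pi - t) / 2)) integrable_on {0..pi}"
      using majorant by (rule has_integral_integrable)
  qed
  also have "\<dots> = H pi - H 0"
    using majorant by (rule integral_unique)
  also have "\<dots> \<le> 4 / x"
    using assms by (simp add: H_def field_simps)
  finally show ?thesis
    by (simp add: weighted_phi_def)
qed

lemma weighted_phi_one_tendsto_0: "(weighted_phi n (\<lambda>_. 1) \<longlongrightarrow> 0) at_top"
  using abs_weighted_phi_one_le by (rule tendsto_0_if_abs_le_const_div)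

lemma has_real_derivative_comparison_fun:
  fixes N :: real
  assumes "N \<noteq> 0"
  shows "((\<lambda>y. y / (N\<^sup>2 + y\<^sup>2)) has_real_derivative (N\<^sup>2 - y\<^sup>2) / (N\<^sup>2 + y\<^sup>2)\<^sup>2) (at y)"
proof -
  have "N\<^sup>2 + y\<^sup>2 \<noteq> 0"
    using assms by (simp add: sum_power2_eq_zero_iff)
  then show ?thesis
    by (auto intro!: derivative_eq_intros simp: field_simps power2_eq_square)
qed

lemma has_real_derivative_comparison_fun':
  fixes N :: real
  assumes "N \<noteq> 0"
  shows "((\<lambda>y. (N\<^sup>2 - y\<^sup>2) / (N\<^sup>2 + y\<^sup>2)\<^sup>2) has_real_derivative 2 * y * (y\<^sup>2 - 3 * N\<^sup>2) / (N\<^sup>2 + y\<^sup>2) ^ 3) (at y)"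
proof -
  define D where "D = N\<^sup>2 + y\<^sup>2"
  have "D \<noteq> 0"
    using assms by (simp add: D_def sum_power2_eq_zero_iff)
  have deriv: "((\<lambda>y. (N\<^sup>2 - y\<^sup>2) / (N\<^sup>2 + y\<^sup>2)\<^sup>2) has_real_derivative
      (- 2 * y * D\<^sup>2 - (N\<^sup>2 - y\<^sup>2) * (2 * D * (2 * y))) / (D\<^sup>2)\<^sup>2) (at y)"
    using \<open>D \<noteq> 0\<close> unfolding D_def by (auto intro!: derivative_eq_intros simp: power2_eq_square)
  have "- 2 * y * D\<^sup>2 - (N\<^sup>2 - y\<^sup>2) * (2 * D * (2 * y)) = 2 * y * (y\<^sup>2 - 3 * N\<^sup>2) * D"
    by (simp add: D_def power2_eq_square algebra_simps)
  then have "(- 2 * y * D\<^sup>2 - (N\<^sup>2 - y\<^sup>2) * (2 * D * (2 * y))) / (D\<^sup>2)\<^sup>2 = 2 * y * (y\<^sup>2 - 3 * N\<^sup>2) / D ^ 3"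
    using \<open>D \<noteq> 0\<close> by (simp add: eval_nat_numeral)
  from DERIV_cong[OF deriv this] show ?thesis
    unfolding D_def .
qed

lemma abs_euler_part_comparison_fun_le:
  fixes N y :: real
  assumes "N \<noteq> 0" and "y \<ge> 0"
  shows "\<bar>y\<^sup>2 * (2 * y * (y\<^sup>2 - 3 * N\<^sup>2) / (N\<^sup>2 + y\<^sup>2) ^ 3) + y * ((N\<^sup>2 - y\<^sup>2) / (N\<^sup>2 + y\<^sup>2)\<^sup>2)\<bar>
    \<le> y / N\<^sup>2"
proof -
  define D where "D = N\<^sup>2 + y\<^sup>2"
  define q where "q = y ^ 4 - 6 * y\<^sup>2 * N\<^sup>2 + N ^ 4"
  have "N\<^sup>2 > 0"
    using assms(1) by simp
  then have "D \<ge> N\<^sup>2" "D > 0"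
    by (auto simp: D_def add_pos_nonneg)
  have "y\<^sup>2 * (2 * y * (y\<^sup>2 - 3 * N\<^sup>2) / D ^ 3) + y * ((N\<^sup>2 - y\<^sup>2) / D\<^sup>2)
      = (2 * y ^ 3 * (y\<^sup>2 - 3 * N\<^sup>2) + y * (N\<^sup>2 - y\<^sup>2) * D) / D ^ 3"
    using \<open>D > 0\<close> by (simp add: field_simps eval_nat_numeral)
  also have "2 * y ^ 3 * (y\<^sup>2 - 3 * N\<^sup>2) + y * (N\<^sup>2 - y\<^sup>2) * D = y * q"
    by (simp add: D_def q_def eval_nat_numeral algebra_simps)
  finally have euler: "y\<^sup>2 * (2 * y * (y\<^sup>2 - 3 * N\<^sup>2) / D ^ 3) + y * ((N\<^sup>2 - y\<^sup>2) / D\<^sup>2) = y * q / D ^ 3" .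
  have "D\<^sup>2 - q = 8 * (y * N)\<^sup>2" "D\<^sup>2 + q = 2 * (y\<^sup>2 - N\<^sup>2)\<^sup>2"
    by (simp_all add: D_def q_def eval_nat_numeral algebra_simps)
  then have "\<bar>q\<bar> \<le> D\<^sup>2"
    unfolding abs_le_iff using zero_le_power2[of "y * N"] zero_le_power2[of "y\<^sup>2 - N\<^sup>2"] by linarith
  then have "\<bar>y * q / D ^ 3\<bar> \<le> y * D\<^sup>2 / D ^ 3"
    using \<open>D > 0\<close> \<open>y \<ge> 0\<close> by (simp add: abs_mult divide_right_mono mult_left_mono)
  also have "\<dots> = y / D"
    using \<open>D > 0\<close> by (simp add: eval_nat_numeral)
  also have "\<dots> \<le> y / N\<^sup>2"
    using \<open>N\<^sup>2 > 0\<close> \<open>D > 0\<close> \<open>D \<ge> N\<^sup>2\<close> \<open>y \<ge> 0\<close> by (intro divide_left_mono) auto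
  finally show ?thesis
    unfolding D_def[symmetric] euler .
qed

lemma abs_bessel_residual_comparison_fun_le:
  fixes N y c :: real
  assumes "N \<noteq> 0" and "y \<ge> 0" and "c \<ge> 0"
  shows "\<bar>y\<^sup>2 * (c * (2 * y * (y\<^sup>2 - 3 * N\<^sup>2) / (N\<^sup>2 + y\<^sup>2) ^ 3)) + y * (c * ((N\<^sup>2 - y\<^sup>2) / (N\<^sup>2 + y\<^sup>2)\<^sup>2))
      - 4 * (N\<^sup>2 + y\<^sup>2) * (c * (y / (N\<^sup>2 + y\<^sup>2))) + 4 * c * y\<bar> \<le> c * y / N\<^sup>2"
proof -
  define E where "E = y\<^sup>2 * (2 * y * (y\<^sup>2 - 3 * N\<^sup>2) / (N\<^sup>2 + y\<^sup>2) ^ 3) + y * ((N\<^sup>2 - y\<^sup>2) / (N\<^sup>2 + y\<^sup>2)\<^sup>2)"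
  have "N\<^sup>2 + y\<^sup>2 \<noteq> 0"
    using assms(1) by (simp add: sum_power2_eq_zero_iff)
  then have "4 * (N\<^sup>2 + y\<^sup>2) * (c * (y / (N\<^sup>2 + y\<^sup>2))) = 4 * c * ((N\<^sup>2 + y\<^sup>2) * (y / (N\<^sup>2 + y\<^sup>2)))"
    by (simp only: ac_simps)
  also have "\<dots> = 4 * c * y"
    using \<open>N\<^sup>2 + y\<^sup>2 \<noteq> 0\<close> by simp
  finally have zeroth_order: "4 * (N\<^sup>2 + y\<^sup>2) * (c * (y / (N\<^sup>2 + y\<^sup>2))) = 4 * c * y" .
  have euler: "y\<^sup>2 * (c * (2 * y * (y\<^sup>2 - 3 * N\<^sup>2) / (N\<^sup>2 + y\<^sup>2) ^ 3)) + y * (c * ((N\<^sup>2 - y\<^sup>2) / (N\<^sup>2 + y\<^sup>2)\<^sup>2))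
      = c * E"
    by (simp add: E_def algebra_simps)
  have "\<bar>c * E\<bar> \<le> c * (y / N\<^sup>2)"
    unfolding abs_mult abs_of_nonneg[OF assms(3)] E_def
    by (rule mult_left_mono[OF abs_euler_part_comparison_fun_le[OF assms(1,2)] assms(3)])
  then show ?thesis
    unfolding euler zeroth_order by simp
qed

lemma comparison_fun_tendsto_0:
  fixes N :: real
  shows "((\<lambda>y. c * (y / (N\<^sup>2 + y\<^sup>2))) \<longlongrightarrow> 0) at_top"
proof (rule tendsto_0_if_abs_le_const_div)
  show "\<bar>c * (y / (N\<^sup>2 + y\<^sup>2))\<bar> \<le> \<bar>c\<bar> / y" if "y > 0" for y
  proof -
    have "0 < N\<^sup>2 + y\<^sup>2" "y * y \<le> 1 * (N\<^sup>2 + y\<^sup>2)"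
      using that by (simp_all add: add_nonneg_pos power2_eq_square)
    then have "0 \<le> y / (N\<^sup>2 + y\<^sup>2)" "y / (N\<^sup>2 + y\<^sup>2) \<le> 1 / y"
      using that by (simp_all add: divide_simps)
    then have "\<bar>c * (y / (N\<^sup>2 + y\<^sup>2))\<bar> \<le> \<bar>c\<bar> * (1 / y)"
      unfolding abs_mult by (simp only: abs_of_nonneg) (rule mult_left_mono, simp_all)
    then show ?thesis
      by simp
  qed
qed

lemma weighted_phi_one_upper_bound:
  assumes "n \<ge> 1" and "x > 0"
  shows "weighted_phi n (\<lambda>_. 1) x \<le> 4 * real n ^ 2 / (4 * real n ^ 2 - 1) * (x / (real n ^ 2 + x\<^sup>2))"
proof -
  define N c where "N = real n" and "c = 4 * N\<^sup>2 / (4 * N\<^sup>2 - 1)"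
  have "N \<noteq> 0" "N\<^sup>2 \<ge> 1"
    using assms(1) by (simp_all add: N_def)
  then have "c \<ge> 0"
    unfolding c_def by (intro divide_nonneg_pos) auto
  have scale: "- 4 * c * y + c * y / N\<^sup>2 = - 4 * y" for y
  proof -
    have "- 4 * c * y + c * y / N\<^sup>2 = - c * y * (4 * N\<^sup>2 - 1) / N\<^sup>2"
      using \<open>N \<noteq> 0\<close> by (simp add: field_simps)
    then show ?thesis
      using \<open>N\<^sup>2 \<ge> 1\<close> \<open>N \<noteq> 0\<close> by (simp add: c_def)
  qed
  have "weighted_phi n (\<lambda>_. 1) x \<le> c * (x / (N\<^sup>2 + x\<^sup>2))"
  proof (rule halfline_comparison_principle[OF has_real_derivative_weighted_phi_one
        DERIV_cmult[OF has_real_derivative_comparison_fun[OF \<open>N \<noteq> 0\<close>]]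
        DERIV_cmult[OF has_real_derivative_comparison_fun'[OF \<open>N \<noteq> 0\<close>]],
        where a = "\<lambda>y. 4 * (N\<^sup>2 + y\<^sup>2)"])
    fix y :: real
    assume "y > 0"
    then show "y\<^sup>2 * (c * (2 * y * (y\<^sup>2 - 3 * N\<^sup>2) / (N\<^sup>2 + y\<^sup>2) ^ 3)) + y * (c * ((N\<^sup>2 - y\<^sup>2) / (N\<^sup>2 + y\<^sup>2)\<^sup>2))
        - 4 * (N\<^sup>2 + y\<^sup>2) * (c * (y / (N\<^sup>2 + y\<^sup>2)))
      \<le> y\<^sup>2 * weighted_phi n (\<lambda>t. 4 * (sin t)\<^sup>2) y + y * weighted_phi n (\<lambda>t. - 2 * sin t) y
        - 4 * (N\<^sup>2 + y\<^sup>2) * weighted_phi n (\<lambda>_. 1) y"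
      using abs_bessel_residual_comparison_fun_le[OF \<open>N \<noteq> 0\<close> _ \<open>c \<ge> 0\<close>, of y]
        weighted_phi_bessel_ode[of y n] scale[of y]
      unfolding abs_le_iff N_def by linarith
  qed (use weighted_phi_one_at_0[OF assms(1)] weighted_phi_one_tendsto_0 comparison_fun_tendsto_0
      assms(2) \<open>N \<noteq> 0\<close> in \<open>simp_all add: add_pos_nonneg\<close>)
  then show ?thesis
    by (simp add: N_def c_def)
qed

lemma weighted_phi_one_lower_bound:
  assumes "n \<ge> 1" and "x > 0"
  shows "4 * real n ^ 2 / (4 * real n ^ 2 + 1) * (x / (real n ^ 2 + x\<^sup>2)) \<le> weighted_phi n (\<lambda>_. 1) x"
proof -
  define N c where "N = real n" and "c = 4 * N\<^sup>2 / (4 * N\<^sup>2 + 1)"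
  have "N \<noteq> 0" "N\<^sup>2 \<ge> 1"
    using assms(1) by (simp_all add: N_def)
  then have "c \<ge> 0"
    unfolding c_def by (intro divide_nonneg_pos) auto
  have scale: "- 4 * c * y - c * y / N\<^sup>2 = - 4 * y" for y
  proof -
    have "- 4 * c * y - c * y / N\<^sup>2 = - c * y * (4 * N\<^sup>2 + 1) / N\<^sup>2"
      using \<open>N \<noteq> 0\<close> by (simp add: field_simps)
    then show ?thesis
      using \<open>N\<^sup>2 \<ge> 1\<close> \<open>N \<noteq> 0\<close> by (simp add: c_def)
  qed
  have "c * (x / (N\<^sup>2 + x\<^sup>2)) \<le> weighted_phi n (\<lambda>_. 1) x"
  proof (rule halfline_comparison_principle[OF
        DERIV_cmult[OF has_real_derivative_comparison_fun[OF \<open>N \<noteq> 0\<close>]]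
        DERIV_cmult[OF has_real_derivative_comparison_fun'[OF \<open>N \<noteq> 0\<close>]]
        has_real_derivative_weighted_phi_one,
        where a = "\<lambda>y. 4 * (N\<^sup>2 + y\<^sup>2)"])
    fix y :: real
    assume "y > 0"
    then show "y\<^sup>2 * weighted_phi n (\<lambda>t. 4 * (sin t)\<^sup>2) y + y * weighted_phi n (\<lambda>t. - 2 * sin t) y
        - 4 * (N\<^sup>2 + y\<^sup>2) * weighted_phi n (\<lambda>_. 1) y
      \<le> y\<^sup>2 * (c * (2 * y * (y\<^sup>2 - 3 * N\<^sup>2) / (N\<^sup>2 + y\<^sup>2) ^ 3)) + y * (c * ((N\<^sup>2 - y\<^sup>2) / (N\<^sup>2 + y\<^sup>2)\<^sup>2))
        - 4 * (N\<^sup>2 + y\<^sup>2) * (c * (y / (N\<^sup>2 + y\<^sup>2)))"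
      using abs_bessel_residual_comparison_fun_le[OF \<open>N \<noteq> 0\<close> _ \<open>c \<ge> 0\<close>, of y]
        weighted_phi_bessel_ode[of y n] scale[of y]
      unfolding abs_le_iff N_def by linarith
  qed (use weighted_phi_one_at_0[OF assms(1)] weighted_phi_one_tendsto_0 comparison_fun_tendsto_0
      assms(2) \<open>N \<noteq> 0\<close> in \<open>simp_all add: add_pos_nonneg\<close>)
  then show ?thesis
    by (simp add: N_def c_def)
qed

lemma rescaled_weighted_phi_one_bounds:
  assumes "n \<ge> 1" and "x > 0"
  shows "4 * real n ^ 2 / (4 * real n ^ 2 + 1) * (x / (1 + x\<^sup>2)) \<le> real n * weighted_phi n (\<lambda>_. 1) (real n * x)"
    and "real n * weighted_phi n (\<lambda>_. 1) (real n * x) \<le> 4 * real n ^ 2 / (4 * real n ^ 2 - 1) * (x / (1 + x\<^sup>2))"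
proof -
  define N where "N = real n"
  have "N > 0"
    using assms(1) by (simp add: N_def)
  have rescale: "N * (c * (N * x / (N\<^sup>2 + (N * x)\<^sup>2))) = c * (x / (1 + x\<^sup>2))" for c
  proof -
    have "N\<^sup>2 + (N * x)\<^sup>2 = N * (N * (1 + x\<^sup>2))"
      by (simp add: power2_eq_square algebra_simps)
    then show ?thesis
      using \<open>N > 0\<close> by simp
  qed
  have "N * x > 0"
    using \<open>N > 0\<close> assms(2) by simp
  from mult_left_mono[OF weighted_phi_one_lower_bound[OF assms(1) this], of N]
    mult_left_mono[OF weighted_phi_one_upper_bound[OF assms(1) this], of N]
  show "4 * real n ^ 2 / (4 * real n ^ 2 + 1) * (x / (1 + x\<^sup>2)) \<le> real n * weighted_phi n (\<lambda>_. 1) (real n * x)"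
    and "real n * weighted_phi n (\<lambda>_. 1) (real n * x) \<le> 4 * real n ^ 2 / (4 * real n ^ 2 - 1) * (x / (1 + x\<^sup>2))"
    using \<open>N > 0\<close> unfolding N_def[symmetric] rescale by simp_all
qed

theorem lemma3p5:
  fixes n :: nat and x :: real
  assumes "n \<ge> 1" and "x > 0"
  shows "varphi n x \<in> \<real>
     \<and> (4 * real n ^ 2) / (4 * real n ^ 2 + 1) * (x / (1 + x ^ 2)) \<le> Re (varphi n x)
     \<and> Re (varphi n x) \<le> (4 * real n ^ 2) / (4 * real n ^ 2 - 1) * (x / (1 + x ^ 2))
     \<and> phi n x \<in> \<real>
     \<and> (4 * real n ^ 2) / (4 * real n ^ 2 + 1) * (x / (real n ^ 2 + x ^ 2)) \<le> Re (phi n x)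
     \<and> Re (phi n x) \<le> (4 * real n ^ 2) / (4 * real n ^ 2 - 1) * (x / (real n ^ 2 + x ^ 2))"
proof -
  have "phi n x = of_real (weighted_phi n (\<lambda>_. 1) x)"
    and "varphi n x = of_real (real n * weighted_phi n (\<lambda>_. 1) (real n * x))"
    by (simp_all add: varphi_def phi_eq_weighted_phi)
  then show ?thesis
    using weighted_phi_one_lower_bound[OF assms] weighted_phi_one_upper_bound[OF assms]
      rescaled_weighted_phi_one_bounds[OF assms]
    by simp
qed

end
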